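(* Let $G=(V,E)$ be an intersecting hypergraph and $c\colon V\to\{0,1\}$ a colouring such that every $c$-monochromatic hitting set for $G$ has size at least $h$, where $h>r(G)$. Then there exist a partial function $f\colon\{0,1\}^V\to\{0,1,*\}$ and an input $x\in f^{-1}( * )$ such that $\mathrm{C}(f)\le r(G)$ and $\min\{\mathrm{C}_{\bar 0}(f,x),\mathrm{C}_{\bar 1}(f,x)\}\ge h$. Moreover $f$ can be taken monotone, in the sense that flipping any input bit from $0$ to $1$ never changes the value from $1$ to $0$ or $*$, nor from $*$ to $0$.
   Context: A hypergraph $G=(V,E)$ is intersecting if $e\cap e'\neq\emptyset$ for all $e,e'\in E$. A set $U\subseteq V$ is a hitting set if it intersects every edge; it is $c$-monochromatic if $c$ is constant on $U$. The rank $r(G)$ is the maximum edge size. For a partial function $f\colon\{0,1\}^V\to\{0,1,*\}$: a partial input $\rho\in\{0,1,*\}^V$ is consistent with $x$ if $\rho_v=x_v$ whenever $\rho_v\neq*$; $|\rho|$ is the number of non-$*$ entries; for $\Sigma\subseteq\{0,1,*\}$, $\rho$ is a $\Sigma$-certificate for $x$ if it is consistent with $x$ and $f(x')\in\Sigma$ for all $x'$ consistent with $\rho$; $\mathrm{C}_\Sigma(f,x)$ is the least size of such a certificate, $\mathrm{C}_\Sigma(f)=\max_{x\in f^{-1}(\Sigma)}\mathrm{C}_\Sigma(f,x)$; $0,1,\bar0,\bar1$ denote $\Sigma=\{0\},\{1\},\{1,*\},\{0,*\}$; $\mathrm{C}(f)=\max\{\mathrm{C}_0(f),\mathrm{C}_1(f)\}$.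 *)

theory Defs
  imports Main
begin

text \<open>Hypergraphs on a finite vertex type: the vertex set V is UNIV of a finite type 'v,
  edges are sets of vertices.\<close>

definition intersecting :: "'v set set \<Rightarrow> bool" where
  "intersecting E \<longleftrightarrow> (\<forall>e\<in>E. \<forall>e'\<in>E. e \<inter> e' \<noteq> {})"

definition hitting_set :: "'v set set \<Rightarrow> 'v set \<Rightarrow> bool" where
  "hitting_set E U \<longleftrightarrow> (\<forall>e\<in>E. U \<inter> e \<noteq> {})"

definition monochromatic :: "('v \<Rightarrow> bool) \<Rightarrow> 'v set \<Rightarrow> bool" where
  "monochromatic c U \<longleftrightarrow> (\<exists>b. \<forall>u\<in>U. c u = b)"

definition rank :: "'v set set \<Rightarrow> nat" where
  "rank E = Max (insert 0 (card ` E))"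

datatype val = Zero | One | Star

text \<open>Partial inputs: None stands for *.\<close>
type_synonym 'v pinput = "'v \<Rightarrow> bool option"

definition consistent :: "'v pinput \<Rightarrow> ('v \<Rightarrow> bool) \<Rightarrow> bool" where
  "consistent \<rho> x \<longleftrightarrow> (\<forall>v. \<rho> v \<noteq> None \<longrightarrow> \<rho> v = Some (x v))"

definition psize :: "'v pinput \<Rightarrow> nat" where
  "psize \<rho> = card {v. \<rho> v \<noteq> None}"

definition is_cert :: "(('v \<Rightarrow> bool) \<Rightarrow> val) \<Rightarrow> val set \<Rightarrow> 'v pinput \<Rightarrow> ('v \<Rightarrow> bool) \<Rightarrow> bool" where
  "is_cert f \<Sigma> \<rho> x \<longleftrightarrow> consistent \<rho> x \<and> (\<forall>x'. consistent \<rho> x' \<longrightarrow> f x' \<in> \<Sigma>)"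

definition cert_at :: "(('v \<Rightarrow> bool) \<Rightarrow> val) \<Rightarrow> val set \<Rightarrow> ('v \<Rightarrow> bool) \<Rightarrow> nat" where
  "cert_at f \<Sigma> x = (LEAST k. \<exists>\<rho>. is_cert f \<Sigma> \<rho> x \<and> psize \<rho> = k)"

definition cert :: "(('v \<Rightarrow> bool) \<Rightarrow> val) \<Rightarrow> val set \<Rightarrow> nat" where
  "cert f \<Sigma> = Max (insert 0 {cert_at f \<Sigma> x | x. f x \<in> \<Sigma>})"

definition cert_complexity :: "(('v \<Rightarrow> bool) \<Rightarrow> val) \<Rightarrow> nat" where
  "cert_complexity f = max (cert f {Zero}) (cert f {One})"

definition monotone_partial :: "(('v \<Rightarrow> bool) \<Rightarrow> val) \<Rightarrow> bool" where
  "monotone_partial f \<longleftrightarrow> (\<forall>x v. \<not> x v \<longrightarrow>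
      (f x = One \<longrightarrow> f (x(v := True)) = One) \<and>
      (f x = Star \<longrightarrow> f (x(v := True)) \<noteq> Zero))"

end

theory Submission
  imports Defs
begin

text \<open>Let \<open>f x\<close> be 1 if some edge is all-ones under \<open>x\<close>, 0 if some edge is all-zeros (the two
  cannot happen together, as edges intersect), and * otherwise. Such an edge is a certificate of
  size at most the rank, so \<open>C(f) \<le> r(G)\<close>. Every edge meets all edges, so it is a hitting set of
  size \<open>\<le> r(G) < h\<close> and hence not \<open>c\<close>-monochromatic: \<open>f c = *\<close>. Finally, if a partial input
  forces \<open>f \<noteq> 0\<close>, the positions it fixes to 1 must meet every edge (otherwise setting all other
  bits to 0 produces an all-zero edge); being consistent with \<open>c\<close>, they form a \<open>c\<close>-monochromatic
  hitting set, so there are at least \<open>h\<close> of them. The case \<open>f \<noteq> 1\<close> is symmetric.\<close>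

definition edge_function :: "'v set set \<Rightarrow> ('v \<Rightarrow> bool) \<Rightarrow> val" where
  "edge_function E x =
     (if \<exists>e\<in>E. \<forall>v\<in>e. x v then One else if \<exists>e\<in>E. \<forall>v\<in>e. \<not> x v then Zero else Star)"

fun val_of :: "bool \<Rightarrow> val" where
  "val_of True = One"
| "val_of False = Zero"

lemma consistent_SomeD:
  assumes "consistent \<rho> x" and "\<rho> v = Some b"
  shows "x v = b"
  using assms unfolding consistent_def by (metis option.discI option.inject)

lemma is_cert_total_input:
  assumes "f x \<in> \<Sigma>"
  shows "is_cert f \<Sigma> (\<lambda>v. Some (x v)) x"
  using assms unfolding is_cert_def consistent_def by (simp add: fun_eq_iff[symmetric])

lemma cert_at_le_psize:
  assumes "is_cert f \<Sigma> \<rho> x"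
  shows "cert_at f \<Sigma> x \<le> psize \<rho>"
  unfolding cert_at_def using assms by (intro Least_le) blast

lemma le_cert_at:
  assumes "f x \<in> \<Sigma>" and "\<And>\<rho>. is_cert f \<Sigma> \<rho> x \<Longrightarrow> h \<le> psize \<rho>"
  shows "h \<le> cert_at f \<Sigma> x"
proof -
  have "is_cert f \<Sigma> (\<lambda>v. Some (x v)) x"
    by (rule is_cert_total_input[of f x]) (rule assms(1))
  then have "\<exists>k \<rho>. is_cert f \<Sigma> \<rho> x \<and> psize \<rho> = k" by blast
  then have "\<exists>\<rho>. is_cert f \<Sigma> \<rho> x \<and> psize \<rho> = cert_at f \<Sigma> x"
    unfolding cert_at_def by (rule LeastI_ex)
  with assms(2) show ?thesis by metis
qed

lemma cert_le:
  fixes f :: "('v::finite \<Rightarrow> bool) \<Rightarrow> val"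
  assumes "\<And>x. f x \<in> \<Sigma> \<Longrightarrow> cert_at f \<Sigma> x \<le> k"
  shows "cert f \<Sigma> \<le> k"
proof -
  have "{cert_at f \<Sigma> x | x. f x \<in> \<Sigma>} \<subseteq> range (cert_at f \<Sigma>)" by auto
  then have "finite {cert_at f \<Sigma> x | x. f x \<in> \<Sigma>}" by (rule finite_subset) simp
  then show ?thesis unfolding cert_def using assms by (subst Max_le_iff) auto
qed

lemma card_fixed_le_psize:
  fixes \<rho> :: "('v::finite) pinput"
  shows "card {v. \<rho> v = Some b} \<le> psize \<rho>"
  unfolding psize_def by (rule card_mono) auto

lemma card_le_rank:
  fixes E :: "('v::finite) set set"
  assumes "e \<in> E"
  shows "card e \<le> rank E"
  unfolding rank_def using assms by (intro Max_ge) auto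

lemma intersecting_edge_hitting_set:
  assumes "intersecting E" and "e \<in> E"
  shows "hitting_set E e"
  using assms unfolding intersecting_def hitting_set_def by blast

lemma edge_function_eq_val_of_iff:
  assumes "intersecting E"
  shows "edge_function E x = val_of b \<longleftrightarrow> (\<exists>e\<in>E. \<forall>v\<in>e. x v = b)"
  using assms unfolding intersecting_def edge_function_def by (cases b) (simp_all, blast)

lemma edge_function_eq_Star_iff:
  "edge_function E x = Star \<longleftrightarrow> (\<forall>e\<in>E. \<not> monochromatic x e)"
  unfolding edge_function_def monochromatic_def by (auto; metis (full_types))

lemma monotone_partial_edge_function: "monotone_partial (edge_function E)"
  unfolding monotone_partial_def edge_function_def
  by (auto split: if_splits)

lemma cert_at_edge_function_le_rank:
  fixes E :: "('v::finite) set set"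
  assumes "intersecting E" and "edge_function E x = val_of b"
  shows "cert_at (edge_function E) {val_of b} x \<le> rank E"
proof -
  obtain e where e: "e \<in> E" "\<forall>v\<in>e. x v = b"
    using assms edge_function_eq_val_of_iff by blast
  define \<rho> :: "'v pinput" where "\<rho> v = (if v \<in> e then Some b else None)" for v
  have "is_cert (edge_function E) {val_of b} \<rho> x"
    unfolding is_cert_def consistent_def
  proof (intro conjI allI impI)
    fix x' assume "\<forall>v. \<rho> v \<noteq> None \<longrightarrow> \<rho> v = Some (x' v)"
    then have "\<forall>v\<in>e. x' v = b" unfolding \<rho>_def by (metis option.inject option.distinct(1))
    then show "edge_function E x' \<in> {val_of b}"
      using assms(1) e(1) edge_function_eq_val_of_iff by blast
  qed (use e(2) in \<open>auto simp: \<rho>_def split: if_splits\<close>)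
  moreover have "psize \<rho> = card e"
    unfolding psize_def \<rho>_def by (rule arg_cong[where f = card]) auto
  ultimately show ?thesis
    using cert_at_le_psize card_le_rank[OF e(1)] by (metis order_trans)
qed

lemma cert_edge_function_le_rank:
  fixes E :: "('v::finite) set set"
  assumes "intersecting E"
  shows "cert (edge_function E) {val_of b} \<le> rank E"
  using cert_at_edge_function_le_rank[OF assms] by (intro cert_le) simp

lemma cert_avoiding_val_of_hitting_set:
  assumes "intersecting E" and "is_cert (edge_function E) {val_of b, Star} \<rho> x"
  shows "hitting_set E {v. \<rho> v = Some b}"
  unfolding hitting_set_def
proof (intro ballI notI)
  fix e assume "e \<in> E" and miss: "{v. \<rho> v = Some b} \<inter> e = {}"
  define x' where "x' v = (if \<rho> v = Some b then b else \<not> b)" for v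
  have "consistent \<rho> x'"
    unfolding consistent_def x'_def by (auto split: if_splits)
  then have avoids: "edge_function E x' \<in> {val_of b, Star}"
    using assms(2) unfolding is_cert_def by blast
  have "\<forall>v\<in>e. x' v = (\<not> b)"
    using miss unfolding x'_def by auto
  then have "edge_function E x' = val_of (\<not> b)"
    unfolding edge_function_eq_val_of_iff[OF assms(1)] using \<open>e \<in> E\<close> by blast
  with avoids show False by (cases b) auto
qed

lemma le_cert_at_edge_function:
  fixes E :: "('v::finite) set set"
  assumes "intersecting E"
    and "\<forall>U. hitting_set E U \<and> monochromatic x U \<longrightarrow> card U \<ge> h"
    and "edge_function E x = Star"
  shows "h \<le> cert_at (edge_function E) {val_of b, Star} x"
proof (rule le_cert_at)
  show "edge_function E x \<in> {val_of b, Star}" using assms(3) by simp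
next
  fix \<rho> assume cert: "is_cert (edge_function E) {val_of b, Star} \<rho> x"
  let ?U = "{v. \<rho> v = Some b}"
  have "\<forall>u\<in>?U. x u = b"
    using cert unfolding is_cert_def by (blast dest: consistent_SomeD)
  then have "monochromatic x ?U" unfolding monochromatic_def by (rule exI)
  moreover have "hitting_set E ?U"
    using assms(1) cert by (rule cert_avoiding_val_of_hitting_set)
  ultimately have "h \<le> card ?U" using assms(2) by simp
  then show "h \<le> psize \<rho>" using card_fixed_le_psize[of \<rho> b] by linarith
qed

theorem theorem2p2:
  fixes E :: "('v::finite) set set" and c :: "'v \<Rightarrow> bool" and h :: nat
  assumes "intersecting E"
    and "\<forall>U. hitting_set E U \<and> monochromatic c U \<longrightarrow> card U \<ge> h"
    and "h > rank E"
  shows "\<exists>(f :: ('v \<Rightarrow> bool) \<Rightarrow> val) x. f x = Star \<and> monotone_partial f \<and> cert_complexity f \<le> rank E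
           \<and> cert_at f {One, Star} x \<ge> h \<and> cert_at f {Zero, Star} x \<ge> h"
proof (intro exI conjI)
  let ?f = "edge_function E"
  show star: "?f c = Star"
    unfolding edge_function_eq_Star_iff
  proof (intro ballI notI)
    fix e assume "e \<in> E" and "monochromatic c e"
    then have "h \<le> card e" using assms(2) intersecting_edge_hitting_set[OF assms(1)] by blast
    then show False using card_le_rank[OF \<open>e \<in> E\<close>] assms(3) by linarith
  qed
  show "monotone_partial ?f" by (rule monotone_partial_edge_function)
  show "cert_complexity ?f \<le> rank E"
    using cert_edge_function_le_rank[OF assms(1), of True]
      cert_edge_function_le_rank[OF assms(1), of False]
    unfolding cert_complexity_def by simp
  show "h \<le> cert_at ?f {One, Star} c"
    using le_cert_at_edge_function[OF assms(1,2) star, of True] by simp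
  show "h \<le> cert_at ?f {Zero, Star} c"
    using le_cert_at_edge_function[OF assms(1,2) star, of False] by simp
qed

end
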